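(* Let $\mathcal{H}$ be a hypergraph on a finite vertex set $V$, let $p\in[0,1]$, $\alpha\in(0,1]$ and $\eta\in(0,1]$. Writing $\mu=\mu_p(\mathcal{H})$ and $\Delta=\Delta_p(\mathcal{H})$, \[ \Pr\big(\nu(\mathcal{H}[V_p])\le \alpha\mu\big)\le \exp\Big(-\big(1-\alpha\log(e/\alpha)-\alpha p-\eta\big)\mu+\big(1+2\alpha p/\eta\big)\Delta\Big). \]
   Context: $V_p$ denotes the random subset of $V$ containing each element independently with probability $p$. For $W\subseteq V$, $\mathcal{H}[W]=\{A\in\mathcal{H}: A\subseteq W\}$. $\nu(\cdot)$ is the matching number (largest number of pairwise disjoint edges). $\mu_p(\mathcal{H})=\sum_{A\in\mathcal{H}}p^{|A|}$ and $\Delta_p(\mathcal{H})=\sum p^{|A\cup B|}$, the sum over unordered pairs $\{A,B\}$ of distinct edges of $\mathcal{H}$ with $A\cap B\neq\emptyset$. *)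

theory Defs
  imports Complex_Main
begin

definition induced :: "'a set set \<Rightarrow> 'a set \<Rightarrow> 'a set set" where
  "induced H W = {A \<in> H. A \<subseteq> W}"

definition matching_number :: "'a set set \<Rightarrow> nat" where
  "matching_number H = Max {card M | M. M \<subseteq> H \<and> pairwise disjnt M}"

definition mu_p :: "real \<Rightarrow> 'a set set \<Rightarrow> real" where
  "mu_p p H = (\<Sum>A\<in>H. p ^ card A)"

definition Delta_p :: "real \<Rightarrow> 'a set set \<Rightarrow> real" where
  "Delta_p p H = (\<Sum>P\<in>{P. P \<subseteq> H \<and> card P = 2 \<and> \<Inter>P \<noteq> {}}. p ^ card (\<Union>P))"

(* probability that the binomial random subset V_p satisfies Q *)
definition prob_rand_subset :: "'a set \<Rightarrow> real \<Rightarrow> ('a set \<Rightarrow> bool) \<Rightarrow> real" where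
  "prob_rand_subset V p Q =
     (\<Sum>W\<in>{W. W \<subseteq> V \<and> Q W}. p ^ card W * (1 - p) ^ card (V - W))"

end

theory Submission
  imports Defs
begin

text \<open>
  Call an edge \<open>A\<close> light if its overlap weight \<open>\<Sum>{p^|B| : B \<noteq> A, B \<inter> A \<noteq> {}}\<close> is at
  most \<open>t = \<eta> / \<alpha>\<close>; by double counting, the heavy edges carry \<open>\<mu>\<close>-mass at most
  \<open>2 p \<Delta> / t\<close>. If \<open>\<nu>(H[V\<^sub>p]) \<le> n\<close>, a maximum matching \<open>M\<close> of the light edges inside
  \<open>V\<^sub>p\<close> has at most \<open>n\<close> edges and \<open>\<Union>M\<close> meets every light edge inside \<open>V\<^sub>p\<close>.
  Conditioning on \<open>\<Union>M \<subseteq> V\<^sub>p\<close>, Janson's inequality bounds the probability that no light edge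
  avoiding \<open>\<Union>M\<close> appears by \<open>exp (-\<mu> + \<Delta> + n (p + t))\<close>, since each edge of \<open>M\<close> meets
  light edges of total weight at most \<open>p + t\<close>. Summing \<open>p^|\<Union>M|\<close> over all such \<open>M\<close> gives at
  most \<open>\<Sum>\<^sub>j\<^sub>\<le>\<^sub>n \<mu>^j / j!\<close>, which is at most \<open>(e / \<alpha>)^(\<alpha> \<mu>)\<close> for \<open>n \<le> \<alpha> \<mu>\<close>.
  An empty edge raises both \<open>\<mu>\<close> and \<open>\<nu>\<close> by one and is removed first.
\<close>

section \<open>Binomial random subsets\<close>

definition subset_weight :: "'a set \<Rightarrow> real \<Rightarrow> 'a set \<Rightarrow> real" where
  "subset_weight X p W = p ^ card W * (1 - p) ^ card (X - W)"

lemma prob_rand_subset_eq_sum: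
  "finite V \<Longrightarrow>
   prob_rand_subset V p Q = (\<Sum>W\<in>Pow V. subset_weight V p W * (if Q W then 1 else 0))"
  unfolding prob_rand_subset_def subset_weight_def
  by (simp add: if_distrib sum.inter_filter[symmetric] Pow_def conj_commute cong: if_cong)

lemma prob_rand_subset_False [simp]: "prob_rand_subset V p (\<lambda>W. False) = 0"
  by (simp add: prob_rand_subset_def)

lemma subset_weight_nonneg: "0 \<le> p \<Longrightarrow> p \<le> 1 \<Longrightarrow> 0 \<le> subset_weight X p W"
  unfolding subset_weight_def by simp

lemma subset_weight_Un:
  assumes "finite V" "S \<subseteq> V" "W1 \<subseteq> S" "W2 \<subseteq> V - S"
  shows "subset_weight V p (W1 \<union> W2) = subset_weight S p W1 * subset_weight (V - S) p W2"
proof -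
  have fin: "finite S" "finite (V - S)" using assms finite_subset by auto
  have "card (W1 \<union> W2) = card W1 + card W2"
    using assms fin by (intro card_Un_disjoint) (auto intro: finite_subset)
  moreover have "V - (W1 \<union> W2) = (S - W1) \<union> ((V - S) - W2)" using assms by auto
  moreover have "card ((S - W1) \<union> ((V - S) - W2)) = card (S - W1) + card ((V - S) - W2)"
    using fin by (intro card_Un_disjoint) auto
  ultimately show ?thesis unfolding subset_weight_def by (simp add: power_add)
qed

lemma sum_subset_weight_split:
  assumes "finite V" "S \<subseteq> V"
  shows "(\<Sum>W\<in>Pow V. subset_weight V p W * f W) =
     (\<Sum>W1\<in>Pow S. subset_weight S p W1 *
        (\<Sum>W2\<in>Pow (V - S). subset_weight (V - S) p W2 * f (W1 \<union> W2)))"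
proof -
  have bij: "bij_betw (\<lambda>(W1, W2). W1 \<union> W2) (Pow S \<times> Pow (V - S)) (Pow V)"
    by (rule bij_betw_byWitness[where f' = "\<lambda>W. (W \<inter> S, W - S)"]) (use assms in auto)
  have "(\<Sum>W\<in>Pow V. subset_weight V p W * f W) =
      (\<Sum>(W1, W2)\<in>Pow S \<times> Pow (V - S). subset_weight V p (W1 \<union> W2) * f (W1 \<union> W2))"
    using sum.reindex_bij_betw[OF bij, of "\<lambda>W. subset_weight V p W * f W"]
    by (simp add: case_prod_beta)
  also have "\<dots> = (\<Sum>(W1, W2)\<in>Pow S \<times> Pow (V - S).
      subset_weight S p W1 * (subset_weight (V - S) p W2 * f (W1 \<union> W2)))"
    using assms by (intro sum.cong refl) (auto simp: subset_weight_Un)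
  also have "\<dots> = (\<Sum>W1\<in>Pow S. \<Sum>W2\<in>Pow (V - S).
      subset_weight S p W1 * (subset_weight (V - S) p W2 * f (W1 \<union> W2)))"
    by (rule sum.cartesian_product[symmetric])
  finally show ?thesis by (simp add: sum_distrib_left)
qed

lemma sum_subset_weight:
  assumes "finite X" "0 \<le> p" "p \<le> 1"
  shows "(\<Sum>W\<in>Pow X. subset_weight X p W) = 1"
  using assms(1)
proof (induction X rule: finite_induct)
  case empty
  then show ?case by (simp add: subset_weight_def)
next
  case (insert x F)
  have "(\<Sum>W\<in>Pow (insert x F). subset_weight (insert x F) p W * 1) =
     (\<Sum>W1\<in>Pow {x}. subset_weight {x} p W1 *
        (\<Sum>W2\<in>Pow (insert x F - {x}). subset_weight (insert x F - {x}) p W2 * 1))"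
    using insert by (intro sum_subset_weight_split) auto
  also have "insert x F - {x} = F" using insert by auto
  also have "Pow {x} = {{}, {x}}" by auto
  finally show ?case using insert by (simp add: subset_weight_def)
qed

lemma prob_rand_subset_split:
  assumes "finite V" "S \<subseteq> V"
  shows "prob_rand_subset V p Q =
    (\<Sum>W1\<in>Pow S. subset_weight S p W1 * prob_rand_subset (V - S) p (\<lambda>W2. Q (W1 \<union> W2)))"
  using assms by (simp add: prob_rand_subset_eq_sum sum_subset_weight_split[OF assms] finite_subset)

lemma prob_rand_subset_nonneg:
  "finite V \<Longrightarrow> 0 \<le> p \<Longrightarrow> p \<le> 1 \<Longrightarrow> 0 \<le> prob_rand_subset V p Q"
  by (simp add: prob_rand_subset_eq_sum sum_nonneg subset_weight_nonneg)

lemma prob_rand_subset_mono: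
  assumes "finite V" "0 \<le> p" "p \<le> 1" "\<And>W. W \<subseteq> V \<Longrightarrow> Q W \<Longrightarrow> R W"
  shows "prob_rand_subset V p Q \<le> prob_rand_subset V p R"
  unfolding prob_rand_subset_eq_sum[OF assms(1)]
  by (intro sum_mono) (use assms subset_weight_nonneg in auto)

lemma prob_rand_subset_le_1:
  assumes "finite V" "0 \<le> p" "p \<le> 1"
  shows "prob_rand_subset V p Q \<le> 1"
proof -
  have "prob_rand_subset V p Q \<le> prob_rand_subset V p (\<lambda>W. True)"
    by (rule prob_rand_subset_mono) (use assms in auto)
  also have "\<dots> = 1"
    using sum_subset_weight[OF assms] by (simp add: prob_rand_subset_eq_sum[OF assms(1)])
  finally show ?thesis .
qed

lemma prob_rand_subset_cong:
  "(\<And>W. W \<subseteq> V \<Longrightarrow> Q W = R W) \<Longrightarrow> prob_rand_subset V p Q = prob_rand_subset V p R"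
  unfolding prob_rand_subset_def by (intro sum.cong) auto

lemma prob_rand_subset_contains:
  assumes "finite V" "S \<subseteq> V"
  shows "prob_rand_subset V p (\<lambda>W. S \<subseteq> W \<and> Q W) =
    p ^ card S * prob_rand_subset (V - S) p (\<lambda>W. Q (S \<union> W))"
proof -
  let ?P = "\<lambda>W1. prob_rand_subset (V - S) p (\<lambda>W2. S \<subseteq> W1 \<union> W2 \<and> Q (W1 \<union> W2))"
  have "prob_rand_subset V p (\<lambda>W. S \<subseteq> W \<and> Q W) = (\<Sum>W1\<in>Pow S. subset_weight S p W1 * ?P W1)"
    by (rule prob_rand_subset_split[OF assms])
  also have "\<dots> = (\<Sum>W1\<in>{S}. subset_weight S p W1 * ?P W1)"
  proof (rule sum.mono_neutral_cong_right)
    show "finite (Pow S)" using assms finite_subset by blast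
    show "\<forall>W1\<in>Pow S - {S}. subset_weight S p W1 * ?P W1 = 0"
    proof
      fix W1 assume "W1 \<in> Pow S - {S}"
      then have "?P W1 = prob_rand_subset (V - S) p (\<lambda>W. False)"
        by (intro prob_rand_subset_cong) auto
      then show "subset_weight S p W1 * ?P W1 = 0" by simp
    qed
  qed auto
  finally show ?thesis by (simp add: subset_weight_def)
qed

lemma prob_rand_subset_contains_decreasing_le:
  assumes "finite V" "S \<subseteq> V" "0 \<le> p" "p \<le> 1"
    and decreasing: "\<And>W W'. W \<subseteq> W' \<Longrightarrow> W' \<subseteq> V \<Longrightarrow> Q W' \<Longrightarrow> Q W"
  shows "prob_rand_subset V p (\<lambda>W. S \<subseteq> W \<and> Q W) \<le> p ^ card S * prob_rand_subset V p Q"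
proof -
  let ?PS = "prob_rand_subset (V - S) p (\<lambda>W. Q (S \<union> W))"
  have "finite S" using assms finite_subset by blast
  then have "?PS = (\<Sum>W1\<in>Pow S. subset_weight S p W1 * ?PS)"
    using sum_subset_weight[of S p] assms by (simp add: sum_distrib_right[symmetric])
  also have "\<dots> \<le> (\<Sum>W1\<in>Pow S. subset_weight S p W1 * prob_rand_subset (V - S) p (\<lambda>W2. Q (W1 \<union> W2)))"
  proof (intro sum_mono mult_left_mono prob_rand_subset_mono)
    fix W1 W assume "W1 \<in> Pow S" "W \<subseteq> V - S" "Q (S \<union> W)"
    then show "Q (W1 \<union> W)" using decreasing[of "W1 \<union> W" "S \<union> W"] assms by auto
  qed (use assms subset_weight_nonneg in auto)
  also have "\<dots> = prob_rand_subset V p Q" by (rule prob_rand_subset_split[OF assms(1,2), symmetric])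
  finally show ?thesis
    using prob_rand_subset_contains[OF assms(1,2), where Q = Q] assms by (simp add: mult_left_mono)
qed

lemma prob_rand_subset_contains_indep:
  assumes "finite V" "S \<subseteq> V" "0 \<le> p" "p \<le> 1"
    and indep: "\<And>W. W \<subseteq> V \<Longrightarrow> Q W = Q (W - S)"
  shows "prob_rand_subset V p (\<lambda>W. S \<subseteq> W \<and> Q W) = p ^ card S * prob_rand_subset V p Q"
proof -
  have indep': "Q (W1 \<union> W) = Q W" if "W1 \<subseteq> S" "W \<subseteq> V - S" for W1 W
  proof -
    have "(W1 \<union> W) - S = W" "W1 \<union> W \<subseteq> V" using that assms(2) by auto
    then show ?thesis using indep[of "W1 \<union> W"] by simp
  qed
  have "finite S" using assms finite_subset by blast
  have "prob_rand_subset V p Q =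
      (\<Sum>W1\<in>Pow S. subset_weight S p W1 * prob_rand_subset (V - S) p (\<lambda>W2. Q (W1 \<union> W2)))"
    by (rule prob_rand_subset_split[OF assms(1,2)])
  also have "\<dots> = (\<Sum>W1\<in>Pow S. subset_weight S p W1 * prob_rand_subset (V - S) p Q)"
    using indep' by (intro sum.cong refl arg_cong2[where f = "(*)"] prob_rand_subset_cong) auto
  also have "\<dots> = prob_rand_subset (V - S) p Q"
    using sum_subset_weight[OF \<open>finite S\<close> assms(3,4)] by (simp add: sum_distrib_right[symmetric])
  also have "\<dots> = prob_rand_subset (V - S) p (\<lambda>W. Q (S \<union> W))"
    using indep' by (intro prob_rand_subset_cong) auto
  finally show ?thesis using prob_rand_subset_contains[OF assms(1,2), where Q = Q] by simp
qed

lemma prob_rand_subset_conj_split: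
  "finite V \<Longrightarrow>
   prob_rand_subset V p Q = prob_rand_subset V p (\<lambda>W. Q W \<and> R W) + prob_rand_subset V p (\<lambda>W. Q W \<and> \<not> R W)"
  unfolding prob_rand_subset_eq_sum by (auto simp: sum.distrib[symmetric] intro!: sum.cong)

lemma prob_rand_subset_le_sum:
  assumes "finite V" "finite I" "0 \<le> p" "p \<le> 1"
    and "\<And>W. W \<subseteq> V \<Longrightarrow> Q W \<Longrightarrow> R W \<or> (\<exists>i\<in>I. S i W)"
  shows "prob_rand_subset V p Q \<le> prob_rand_subset V p R + (\<Sum>i\<in>I. prob_rand_subset V p (S i))"
proof -
  let ?ind = "\<lambda>b. if b then 1 else (0::real)"
  have "prob_rand_subset V p Q \<le>
      (\<Sum>W\<in>Pow V. subset_weight V p W * (?ind (R W) + (\<Sum>i\<in>I. ?ind (S i W))))"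
    unfolding prob_rand_subset_eq_sum[OF assms(1)]
  proof (intro sum_mono mult_left_mono)
    fix W assume W: "W \<in> Pow V"
    show "0 \<le> subset_weight V p W" using assms subset_weight_nonneg by blast
    show "?ind (Q W) \<le> ?ind (R W) + (\<Sum>i\<in>I. ?ind (S i W))"
    proof (cases "Q W \<and> \<not> R W")
      case True
      then obtain i where i: "i \<in> I" "S i W" using assms(5) W by blast
      have "?ind (S i W) \<le> (\<Sum>i\<in>I. ?ind (S i W))"
        using i assms(2) by (intro member_le_sum) auto
      then show ?thesis using i True by simp
    qed (auto simp: sum_nonneg)
  qed
  also have "\<dots> = prob_rand_subset V p R + (\<Sum>i\<in>I. prob_rand_subset V p (S i))"
    unfolding prob_rand_subset_eq_sum[OF assms(1)] distrib_left sum.distrib sum_distrib_left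
    by (subst sum.swap) simp
  finally show ?thesis .
qed

lemma prob_rand_subset_union_bound:
  assumes "finite V" "finite I" "0 \<le> p" "p \<le> 1"
  shows "prob_rand_subset V p (\<lambda>W. \<exists>i\<in>I. S i W) \<le> (\<Sum>i\<in>I. prob_rand_subset V p (S i))"
  using prob_rand_subset_le_sum[OF assms, of "\<lambda>W. \<exists>i\<in>I. S i W" "\<lambda>W. False" S] by simp

section \<open>Janson's inequality\<close>

lemma mu_p_nonneg: "0 \<le> p \<Longrightarrow> 0 \<le> mu_p p H"
  unfolding mu_p_def by (simp add: sum_nonneg)

lemma mu_p_insert: "finite H \<Longrightarrow> A \<notin> H \<Longrightarrow> mu_p p (insert A H) = p ^ card A + mu_p p H"
  unfolding mu_p_def by simp

lemma mu_p_mono: "finite H' \<Longrightarrow> H \<subseteq> H' \<Longrightarrow> 0 \<le> p \<Longrightarrow> mu_p p H \<le> mu_p p H'"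
  unfolding mu_p_def by (rule sum_mono2) auto

lemma mu_p_remove_empty: "finite H \<Longrightarrow> mu_p p H = mu_p p (H - {{}}) + (if {} \<in> H then 1 else 0)"
  unfolding mu_p_def by (cases "{} \<in> H") (auto simp: sum.remove)

definition intersecting_pairs :: "'a set set \<Rightarrow> 'a set set set" where
  "intersecting_pairs H = {P. P \<subseteq> H \<and> card P = 2 \<and> \<Inter>P \<noteq> {}}"

lemma Delta_p_intersecting_pairs: "Delta_p p H = (\<Sum>P\<in>intersecting_pairs H. p ^ card (\<Union>P))"
  unfolding Delta_p_def intersecting_pairs_def ..

lemma finite_intersecting_pairs: "finite H \<Longrightarrow> finite (intersecting_pairs H)"
  unfolding intersecting_pairs_def by (rule finite_subset[of _ "Pow H"]) auto

lemma Delta_p_mono: "finite H' \<Longrightarrow> H \<subseteq> H' \<Longrightarrow> 0 \<le> p \<Longrightarrow> Delta_p p H \<le> Delta_p p H'"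
  unfolding Delta_p_intersecting_pairs
  by (intro sum_mono2 finite_intersecting_pairs) (auto simp: intersecting_pairs_def)

lemma Delta_p_remove_empty: "Delta_p p H = Delta_p p (H - {{}})"
proof -
  have "intersecting_pairs H = intersecting_pairs (H - {{}})"
    unfolding intersecting_pairs_def by blast
  then show ?thesis unfolding Delta_p_intersecting_pairs by simp
qed

lemma Delta_p_insert:
  assumes "finite H" "A \<notin> H"
  shows "Delta_p p (insert A H) = Delta_p p H + (\<Sum>B\<in>{B\<in>H. A \<inter> B \<noteq> {}}. p ^ card (A \<union> B))"
proof -
  let ?N = "{B\<in>H. A \<inter> B \<noteq> {}}"
  have eq: "intersecting_pairs (insert A H) = intersecting_pairs H \<union> (\<lambda>B. {A, B}) ` ?N"
  proof (intro equalityI subsetI)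
    fix P assume P: "P \<in> intersecting_pairs (insert A H)"
    then obtain X Y where XY: "P = {X, Y}" "X \<noteq> Y"
      unfolding intersecting_pairs_def by (auto simp: card_2_iff)
    show "P \<in> intersecting_pairs H \<union> (\<lambda>B. {A, B}) ` ?N"
    proof (cases "A \<in> P")
      case False
      then show ?thesis using P unfolding intersecting_pairs_def by auto
    next
      case True
      then obtain B where B: "P = {A, B}" "A \<noteq> B" using XY by (metis insert_commute insertE singletonD)
      then have "B \<in> ?N" using P unfolding intersecting_pairs_def by auto
      then show ?thesis using B by blast
    qed
  qed (use assms in \<open>auto simp: intersecting_pairs_def card_2_iff\<close>)
  have disj: "intersecting_pairs H \<inter> (\<lambda>B. {A, B}) ` ?N = {}"
    using assms unfolding intersecting_pairs_def by auto
  have inj: "inj_on (\<lambda>B. {A, B}) ?N"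
    using assms by (auto simp: inj_on_def doubleton_eq_iff)
  show ?thesis unfolding Delta_p_intersecting_pairs eq
    by (subst sum.union_disjoint)
      (use assms finite_intersecting_pairs disj in \<open>auto simp: sum.reindex[OF inj]\<close>)
qed

lemma prob_rand_subset_contains_avoid_ge:
  assumes V: "finite V" and G: "G \<subseteq> Pow V" "finite G" and A: "A \<subseteq> V" and p: "0 \<le> p" "p \<le> 1"
  shows "(p ^ card A - (\<Sum>B\<in>{B\<in>G. A \<inter> B \<noteq> {}}. p ^ card (A \<union> B))) *
      prob_rand_subset V p (\<lambda>W. \<forall>B\<in>G. \<not> B \<subseteq> W) \<le>
    prob_rand_subset V p (\<lambda>W. A \<subseteq> W \<and> (\<forall>B\<in>G. \<not> B \<subseteq> W))"
    (is "(?x - ?s) * ?c \<le> ?q")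
proof -
  define N where "N = {B\<in>G. A \<inter> B \<noteq> {}}"
  define avoid_far where "avoid_far = (\<lambda>W. \<forall>B\<in>G - N. \<not> B \<subseteq> W)"
  define e where "e = prob_rand_subset V p avoid_far"
  have "finite N" using G unfolding N_def by auto
  text \<open>Since \<open>avoid_far\<close> ignores \<open>A\<close>, it is independent of \<open>A \<subseteq> W\<close>; and if \<open>A \<subseteq> W\<close>
    and \<open>avoid_far W\<close> hold but some edge of \<open>G\<close> lies in \<open>W\<close>, then some \<open>B \<in> N\<close> has
    \<open>A \<union> B \<subseteq> W\<close>. Harris' inequality for the decreasing event \<open>avoid_far\<close> bounds each of these.\<close>
  have "?x * e = prob_rand_subset V p (\<lambda>W. A \<subseteq> W \<and> avoid_far W)"
    unfolding e_def
  proof (rule prob_rand_subset_contains_indep[OF V A p, symmetric])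
    have "B \<subseteq> W - A \<longleftrightarrow> B \<subseteq> W" if "B \<in> G - N" for B W using that unfolding N_def by blast
    then show "avoid_far W = avoid_far (W - A)" for W unfolding avoid_far_def by auto
  qed
  also have "\<dots> \<le> ?q + (\<Sum>B\<in>N. prob_rand_subset V p (\<lambda>W. A \<union> B \<subseteq> W \<and> avoid_far W))"
  proof (rule prob_rand_subset_le_sum[OF V \<open>finite N\<close> p])
    fix W assume W: "A \<subseteq> W \<and> avoid_far W"
    show "(A \<subseteq> W \<and> (\<forall>B\<in>G. \<not> B \<subseteq> W)) \<or> (\<exists>B\<in>N. A \<union> B \<subseteq> W \<and> avoid_far W)"
    proof (cases "\<forall>B\<in>G. \<not> B \<subseteq> W")
      case False
      then obtain B where "B \<in> G" "B \<subseteq> W" by blast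
      then have "B \<in> N" using W unfolding avoid_far_def by blast
      then show ?thesis using \<open>B \<subseteq> W\<close> W by blast
    qed (use W in blast)
  qed
  also have "\<dots> \<le> ?q + (\<Sum>B\<in>N. p ^ card (A \<union> B) * e)"
  proof (intro add_left_mono sum_mono)
    fix B assume "B \<in> N"
    then have "A \<union> B \<subseteq> V" using A G unfolding N_def by auto
    then show "prob_rand_subset V p (\<lambda>W. A \<union> B \<subseteq> W \<and> avoid_far W) \<le> p ^ card (A \<union> B) * e"
      unfolding e_def by (rule prob_rand_subset_contains_decreasing_le[OF V _ p])
        (unfold avoid_far_def, blast)
  qed
  finally have q_ge: "(?x - ?s) * e \<le> ?q" unfolding N_def by (simp add: sum_distrib_left algebra_simps)
  have "?c \<le> e" unfolding e_def avoid_far_def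
    by (rule prob_rand_subset_mono[OF V p]) blast
  show ?thesis
  proof (cases "0 \<le> ?x - ?s")
    case True
    have "(?x - ?s) * ?c \<le> (?x - ?s) * e" using \<open>?c \<le> e\<close> True by (rule mult_left_mono)
    then show ?thesis using q_ge by linarith
  next
    case False
    then have "(?x - ?s) * ?c \<le> 0" by (simp add: mult_nonpos_nonneg prob_rand_subset_nonneg V p)
    then show ?thesis
      using prob_rand_subset_nonneg[OF V p, of "\<lambda>W. A \<subseteq> W \<and> (\<forall>B\<in>G. \<not> B \<subseteq> W)"] by linarith
  qed
qed

lemma janson_insert:
  assumes V: "finite V" and G: "G \<subseteq> Pow V" "finite G" and A: "A \<subseteq> V" and p: "0 \<le> p" "p \<le> 1"
  shows "prob_rand_subset V p (\<lambda>W. \<forall>B\<in>insert A G. \<not> B \<subseteq> W) \<le>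
      exp ((\<Sum>B\<in>{B\<in>G. A \<inter> B \<noteq> {}}. p ^ card (A \<union> B)) - p ^ card A) *
      prob_rand_subset V p (\<lambda>W. \<forall>B\<in>G. \<not> B \<subseteq> W)"
    (is "_ \<le> exp (?s - ?x) * ?c")
proof -
  let ?q = "prob_rand_subset V p (\<lambda>W. A \<subseteq> W \<and> (\<forall>B\<in>G. \<not> B \<subseteq> W))"
  have "prob_rand_subset V p (\<lambda>W. \<forall>B\<in>insert A G. \<not> B \<subseteq> W) = ?c - ?q"
    using prob_rand_subset_conj_split[OF V, where Q = "\<lambda>W. \<forall>B\<in>G. \<not> B \<subseteq> W" and R = "\<lambda>W. A \<subseteq> W"]
    by (simp add: conj_commute)
  also have "\<dots> \<le> (1 + (?s - ?x)) * ?c"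
    using prob_rand_subset_contains_avoid_ge[OF V G A p] by (simp add: algebra_simps)
  also have "\<dots> \<le> exp (?s - ?x) * ?c"
    by (intro mult_right_mono exp_ge_add_one_self prob_rand_subset_nonneg V p)
  finally show ?thesis .
qed

theorem janson_inequality:
  assumes V: "finite V" and G: "G \<subseteq> Pow V" and p: "0 \<le> p" "p \<le> 1"
  shows "prob_rand_subset V p (\<lambda>W. \<forall>B\<in>G. \<not> B \<subseteq> W) \<le> exp (- mu_p p G + Delta_p p G)"
proof -
  have "finite G" using G V by (meson finite_Pow_iff finite_subset)
  then show ?thesis using G
  proof (induction G rule: finite_induct)
    case empty
    have "Delta_p p ({} :: 'a set set) = 0"
      unfolding Delta_p_intersecting_pairs intersecting_pairs_def by (auto intro!: sum.neutral)
    then show ?case using prob_rand_subset_le_1[OF V p] by (simp add: mu_p_def)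
  next
    case (insert A G)
    let ?s = "\<Sum>B\<in>{B\<in>G. A \<inter> B \<noteq> {}}. p ^ card (A \<union> B)"
    have "prob_rand_subset V p (\<lambda>W. \<forall>B\<in>insert A G. \<not> B \<subseteq> W) \<le>
        exp (?s - p ^ card A) * prob_rand_subset V p (\<lambda>W. \<forall>B\<in>G. \<not> B \<subseteq> W)"
      using insert by (intro janson_insert[OF V _ _ _ p]) auto
    also have "\<dots> \<le> exp (?s - p ^ card A) * exp (- mu_p p G + Delta_p p G)"
      using insert by (intro mult_left_mono) auto
    also have "\<dots> = exp (- mu_p p (insert A G) + Delta_p p (insert A G))"
      using insert by (simp add: mu_p_insert Delta_p_insert mult_exp_exp algebra_simps)
    finally show ?case .
  qed
qed

section \<open>Light edges\<close>

definition overlap_weight :: "'a set set \<Rightarrow> real \<Rightarrow> 'a set \<Rightarrow> real" where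
  "overlap_weight H p A = (\<Sum>B\<in>{B\<in>H. B \<noteq> A \<and> B \<inter> A \<noteq> {}}. p ^ card B)"

definition light_edges :: "'a set set \<Rightarrow> real \<Rightarrow> real \<Rightarrow> 'a set set" where
  "light_edges H p t = {A\<in>H. overlap_weight H p A \<le> t}"

lemma overlap_weight_nonneg: "0 \<le> p \<Longrightarrow> 0 \<le> overlap_weight H p A"
  unfolding overlap_weight_def by (simp add: sum_nonneg)

lemma sum_ordered_intersecting_pairs:
  fixes f :: "'a set \<Rightarrow> 'b :: comm_semiring_1"
  assumes "finite H"
  shows "(\<Sum>(A, B)\<in>Sigma H (\<lambda>A. {B\<in>H. B \<noteq> A \<and> B \<inter> A \<noteq> {}}). f (A \<union> B)) =
    2 * (\<Sum>P\<in>intersecting_pairs H. f (\<Union>P))"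
proof -
  define ordered where "ordered = Sigma H (\<lambda>A. {B\<in>H. B \<noteq> A \<and> B \<inter> A \<noteq> {}})"
  have "finite ordered" unfolding ordered_def using assms by auto
  let ?pair = "\<lambda>(A, B). {A, B}"
  have "?pair ` ordered \<subseteq> intersecting_pairs H"
    unfolding ordered_def intersecting_pairs_def by (clarsimp simp: Int_commute)
  have "(\<Sum>(A, B)\<in>ordered. f (A \<union> B)) =
      (\<Sum>P\<in>intersecting_pairs H. \<Sum>(A, B)\<in>{x\<in>ordered. ?pair x = P}. f (A \<union> B))"
    by (rule sum.group[symmetric, OF \<open>finite ordered\<close> finite_intersecting_pairs[OF assms]]) fact
  also have "\<dots> = (\<Sum>P\<in>intersecting_pairs H. 2 * f (\<Union>P))"
  proof (rule sum.cong[OF refl])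
    fix P assume P: "P \<in> intersecting_pairs H"
    then have "card P = 2" unfolding intersecting_pairs_def by simp
    then obtain X Y where XY: "P = {X, Y}" "X \<noteq> Y" by (meson card_2_iff)
    have XY': "X \<in> H" "Y \<in> H" "X \<inter> Y \<noteq> {}"
      using P XY unfolding intersecting_pairs_def by auto
    have "{x\<in>ordered. ?pair x = P} = {(X, Y), (Y, X)}"
    proof (intro equalityI subsetI)
      fix x assume "x \<in> {x\<in>ordered. ?pair x = P}"
      then show "x \<in> {(X, Y), (Y, X)}" using XY by (cases x) (auto simp: doubleton_eq_iff)
    next
      fix x assume "x \<in> {(X, Y), (Y, X)}"
      then show "x \<in> {x\<in>ordered. ?pair x = P}"
        using XY XY' unfolding ordered_def by (auto simp: Int_commute)
    qed
    then show "(\<Sum>(A, B)\<in>{x\<in>ordered. ?pair x = P}. f (A \<union> B)) = 2 * f (\<Union>P)"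
      using XY by (simp add: Un_commute mult_2)
  qed
  finally show ?thesis unfolding ordered_def by (simp add: sum_distrib_left)
qed

lemma sum_overlap_weight_le:
  assumes V: "finite V" and H: "H \<subseteq> Pow V" and p: "0 \<le> p" "p \<le> 1"
  shows "(\<Sum>A\<in>H. p ^ card A * overlap_weight H p A) \<le> 2 * p * Delta_p p H"
proof -
  have "finite H" using assms by (meson finite_Pow_iff finite_subset)
  define ordered where "ordered = Sigma H (\<lambda>A. {B\<in>H. B \<noteq> A \<and> B \<inter> A \<noteq> {}})"
  have "(\<Sum>A\<in>H. p ^ card A * overlap_weight H p A) = (\<Sum>(A, B)\<in>ordered. p ^ card A * p ^ card B)"
    unfolding ordered_def overlap_weight_def sum_distrib_left using \<open>finite H\<close> by (subst sum.Sigma) auto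
  also have "\<dots> \<le> (\<Sum>(A, B)\<in>ordered. p * p ^ card (A \<union> B))"
  proof (rule sum_mono, clarify)
    fix A B assume "(A, B) \<in> ordered"
    then have "A \<inter> B \<noteq> {}" "finite A" "finite B"
      unfolding ordered_def using H V finite_subset by blast+
    then have "card (A \<union> B) + 1 \<le> card A + card B"
      using card_Un_Int[of A B] card_gt_0_iff[of "A \<inter> B"] by simp
    then have "p ^ (card A + card B) \<le> p ^ (card (A \<union> B) + 1)"
      using p by (intro power_decreasing) auto
    then show "p ^ card A * p ^ card B \<le> p * p ^ card (A \<union> B)" by (simp add: power_add)
  qed
  also have "\<dots> = p * (\<Sum>(A, B)\<in>ordered. p ^ card (A \<union> B))"
    by (simp add: sum_distrib_left case_prod_beta)
  also have "\<dots> = 2 * p * Delta_p p H"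
    unfolding ordered_def sum_ordered_intersecting_pairs[OF \<open>finite H\<close>, where f = "\<lambda>S. p ^ card S"] Delta_p_intersecting_pairs
    by simp
  finally show ?thesis .
qed

lemma mu_p_heavy_edges_le:
  assumes V: "finite V" and H: "H \<subseteq> Pow V" and p: "0 \<le> p" "p \<le> 1" and t: "0 < t"
  shows "mu_p p H - mu_p p (light_edges H p t) \<le> 2 * p * Delta_p p H / t"
proof -
  have "finite H" using H V by (meson finite_Pow_iff finite_subset)
  let ?heavy = "H - light_edges H p t"
  have "mu_p p H - mu_p p (light_edges H p t) = (\<Sum>A\<in>?heavy. p ^ card A)"
    unfolding mu_p_def using \<open>finite H\<close> by (subst sum.subset_diff[of "light_edges H p t"]) (auto simp: light_edges_def)
  also have "\<dots> \<le> (\<Sum>A\<in>?heavy. p ^ card A * overlap_weight H p A / t)"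
  proof (rule sum_mono)
    fix A assume "A \<in> ?heavy"
    then have "p ^ card A * t \<le> p ^ card A * overlap_weight H p A"
      using p by (intro mult_left_mono) (auto simp: light_edges_def)
    then show "p ^ card A \<le> p ^ card A * overlap_weight H p A / t" using t by (simp add: field_simps)
  qed
  also have "\<dots> \<le> (\<Sum>A\<in>H. p ^ card A * overlap_weight H p A) / t"
    unfolding sum_divide_distrib
    by (rule sum_mono2) (use \<open>finite H\<close> p t in \<open>auto intro!: divide_nonneg_pos mult_nonneg_nonneg overlap_weight_nonneg\<close>)
  also have "\<dots> \<le> 2 * p * Delta_p p H / t"
    using sum_overlap_weight_le[OF V H p] t by (simp add: divide_right_mono)
  finally show ?thesis .
qed

lemma sum_UN_le:
  fixes f :: "'b \<Rightarrow> real"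
  assumes "finite I" "\<And>i. i \<in> I \<Longrightarrow> finite (A i)" "\<And>x. 0 \<le> f x"
  shows "(\<Sum>x\<in>(\<Union>i\<in>I. A i). f x) \<le> (\<Sum>i\<in>I. \<Sum>x\<in>A i. f x)"
  using assms(1,2)
proof (induction I rule: finite_induct)
  case empty
  then show ?case by simp
next
  case (insert i I)
  have "(\<Sum>x\<in>A i \<union> (\<Union>j\<in>I. A j). f x) \<le> (\<Sum>x\<in>A i. f x) + (\<Sum>x\<in>(\<Union>j\<in>I. A j). f x)"
    using sum.union_inter[of "A i" "\<Union>j\<in>I. A j" f] insert.prems insert.hyps(1)
      sum_nonneg[of "A i \<inter> (\<Union>j\<in>I. A j)" f] assms(3) by simp
  also have "\<dots> \<le> (\<Sum>x\<in>A i. f x) + (\<Sum>j\<in>I. \<Sum>x\<in>A j. f x)" using insert by simp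
  finally show ?case using insert by simp
qed

lemma mu_p_meeting_light_edges_le:
  fixes p t :: real
  assumes V: "finite V" and H: "H \<subseteq> Pow V" and ne: "{} \<notin> H" and p: "0 \<le> p" "p \<le> 1"
    and M: "M \<subseteq> light_edges H p t"
  shows "mu_p p {B\<in>light_edges H p t. B \<inter> \<Union>M \<noteq> {}} \<le> card M * (p + t)"
proof -
  let ?L = "light_edges H p t"
  have "finite H" using H V by (meson finite_Pow_iff finite_subset)
  moreover have "?L \<subseteq> H" by (auto simp: light_edges_def)
  ultimately have "finite ?L" by (rule finite_subset[rotated])
  then have "finite M" using M by (rule finite_subset[rotated])
  have "{B\<in>?L. B \<inter> \<Union>M \<noteq> {}} = (\<Union>A\<in>M. {B\<in>?L. B \<inter> A \<noteq> {}})" by blast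
  then have "mu_p p {B\<in>?L. B \<inter> \<Union>M \<noteq> {}} = (\<Sum>B\<in>(\<Union>A\<in>M. {B\<in>?L. B \<inter> A \<noteq> {}}). p ^ card B)"
    by (simp add: mu_p_def)
  also have "\<dots> \<le> (\<Sum>A\<in>M. \<Sum>B\<in>{B\<in>?L. B \<inter> A \<noteq> {}}. p ^ card B)"
    by (rule sum_UN_le) (use \<open>finite M\<close> \<open>finite ?L\<close> p in simp_all)
  also have "\<dots> \<le> (\<Sum>A\<in>M. p + t)"
  proof (rule sum_mono)
    fix A assume "A \<in> M"
    then have A: "A \<in> ?L" "A \<in> H" "A \<noteq> {}" using M ne by (auto simp: light_edges_def)
    then have "finite A" using H V by (auto intro: finite_subset[of A V])
    then have "1 \<le> card A" using \<open>A \<noteq> {}\<close> by (simp add: Suc_le_eq card_gt_0_iff)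
    have "(\<Sum>B\<in>{B\<in>?L. B \<inter> A \<noteq> {}}. p ^ card B) =
        p ^ card A + (\<Sum>B\<in>{B\<in>?L. B \<inter> A \<noteq> {}} - {A}. p ^ card B)"
      using A \<open>finite ?L\<close> by (intro sum.remove) auto
    also have "(\<Sum>B\<in>{B\<in>?L. B \<inter> A \<noteq> {}} - {A}. p ^ card B) \<le> overlap_weight H p A"
      unfolding overlap_weight_def
      by (rule sum_mono2) (use \<open>finite H\<close> p in \<open>auto simp: light_edges_def\<close>)
    also have "overlap_weight H p A \<le> t" using A by (simp add: light_edges_def)
    also have "p ^ card A \<le> p ^ 1" using p \<open>1 \<le> card A\<close> by (intro power_decreasing) auto
    finally show "(\<Sum>B\<in>{B\<in>?L. B \<inter> A \<noteq> {}}. p ^ card B) \<le> p + t" by simp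
  qed
  finally show ?thesis by simp
qed

section \<open>Matchings and transversals\<close>

lemma finite_induced: "finite H \<Longrightarrow> finite (induced H W)"
  unfolding induced_def by simp

lemma finite_matching_sizes: "finite H \<Longrightarrow> finite {card M |M. M \<subseteq> H \<and> pairwise disjnt M}"
  by (rule finite_subset[of _ "card ` Pow H"]) auto

lemma card_le_matching_number:
  "finite H \<Longrightarrow> M \<subseteq> H \<Longrightarrow> pairwise disjnt M \<Longrightarrow> card M \<le> matching_number H"
  unfolding matching_number_def by (rule Max_ge[OF finite_matching_sizes]) auto

lemma obtain_maximum_matching:
  assumes "finite H"
  obtains M where "M \<subseteq> H" "pairwise disjnt M" "card M = matching_number H"
proof -
  have "matching_number H \<in> {card M |M. M \<subseteq> H \<and> pairwise disjnt M}"
    unfolding matching_number_def by (rule Max_in[OF finite_matching_sizes[OF assms]]) auto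
  then show ?thesis using that by auto
qed

lemma matching_number_mono: "finite H' \<Longrightarrow> H \<subseteq> H' \<Longrightarrow> matching_number H \<le> matching_number H'"
  by (metis finite_subset card_le_matching_number obtain_maximum_matching order.trans)

lemma matching_number_remove_empty:
  assumes "finite H" "{} \<in> H"
  shows "matching_number (induced (H - {{}}) W) + 1 = matching_number (induced H W)"
proof (rule antisym)
  obtain M where M: "M \<subseteq> induced (H - {{}}) W" "pairwise disjnt M"
      "card M = matching_number (induced (H - {{}}) W)"
    using obtain_maximum_matching[OF finite_induced[of "H - {{}}" W]] assms by auto
  have "M \<subseteq> H" "{} \<notin> M" using M(1) by (auto simp: induced_def)
  then have "finite M" using assms(1) finite_subset by blast
  have "insert {} M \<subseteq> induced H W" "pairwise disjnt (insert {} M)"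
    using M(1,2) assms unfolding induced_def pairwise_insert by (auto simp: disjnt_def)
  then have "card (insert {} M) \<le> matching_number (induced H W)"
    by (intro card_le_matching_number finite_induced assms(1))
  then show "matching_number (induced (H - {{}}) W) + 1 \<le> matching_number (induced H W)"
    using M(3) \<open>finite M\<close> \<open>{} \<notin> M\<close> by simp
next
  obtain M where M: "M \<subseteq> induced H W" "pairwise disjnt M" "card M = matching_number (induced H W)"
    using obtain_maximum_matching[OF finite_induced[OF assms(1)]] by blast
  have "M - {{}} \<subseteq> induced (H - {{}}) W" "pairwise disjnt (M - {{}})"
    using M(1,2) unfolding induced_def by (auto simp: pairwise_def)
  then have "card (M - {{}}) \<le> matching_number (induced (H - {{}}) W)"
    by (intro card_le_matching_number finite_induced) (use assms(1) in auto)
  moreover have "finite M" using M(1) assms(1) finite_subset[of M H] by (auto simp: induced_def)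
  then have "card M \<le> card (M - {{}}) + 1" by (cases "{} \<in> M") (auto simp: card_Diff_singleton)
  ultimately show "matching_number (induced H W) \<le> matching_number (induced (H - {{}}) W) + 1"
    using M(3) by linarith
qed

definition transversal_within :: "'a set set \<Rightarrow> 'a set \<Rightarrow> 'a set \<Rightarrow> bool" where
  "transversal_within H W U \<longleftrightarrow> U \<subseteq> W \<and> (\<forall>B\<in>induced H W. B \<inter> U \<noteq> {})"

lemma obtain_transversal_matching:
  assumes "finite H" "{} \<notin> H" "H' \<subseteq> H" "matching_number (induced H W) \<le> n"
  obtains M where "M \<subseteq> H'" "pairwise disjnt M" "card M \<le> n" "transversal_within H' W (\<Union>M)"
proof -
  have "finite H'" using assms finite_subset by blast
  obtain M where M: "M \<subseteq> induced H' W" "pairwise disjnt M" "card M = matching_number (induced H' W)"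
    using obtain_maximum_matching[OF finite_induced[OF \<open>finite H'\<close>]] by blast
  have "matching_number (induced H' W) \<le> matching_number (induced H W)"
    using assms(3) by (intro matching_number_mono finite_induced assms(1)) (auto simp: induced_def)
  then have "card M \<le> n" using M(3) assms(4) by linarith
  have "M \<subseteq> H'" using M(1) by (auto simp: induced_def)
  then have "finite M" using \<open>finite H'\<close> by (rule finite_subset)
  have "B \<inter> \<Union>M \<noteq> {}" if B: "B \<in> induced H' W" for B
  proof
    assume disj: "B \<inter> \<Union>M = {}"
    have "B \<noteq> {}" using B assms(2,3) by (auto simp: induced_def)
    then have "B \<notin> M" using disj by auto
    have "insert B M \<subseteq> induced H' W" "pairwise disjnt (insert B M)"
      using M(1,2) B disj unfolding pairwise_insert by (auto simp: disjnt_def)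
    then have "card (insert B M) \<le> matching_number (induced H' W)"
      by (intro card_le_matching_number finite_induced \<open>finite H'\<close>)
    then show False using M(3) \<open>B \<notin> M\<close> \<open>finite M\<close> by simp
  qed
  moreover have "\<Union>M \<subseteq> W" using M(1) by (auto simp: induced_def)
  ultimately show ?thesis
    using that[OF \<open>M \<subseteq> H'\<close> M(2) \<open>card M \<le> n\<close>] by (simp add: transversal_within_def)
qed

lemma prob_transversal_le:
  assumes V: "finite V" and G: "G \<subseteq> Pow V" and U: "U \<subseteq> V" and p: "0 \<le> p" "p \<le> 1"
  shows "prob_rand_subset V p (\<lambda>W. transversal_within G W U) \<le>
    p ^ card U * exp (- mu_p p {B\<in>G. B \<inter> U = {}} + Delta_p p {B\<in>G. B \<inter> U = {}})"
proof -
  let ?GU = "{B\<in>G. B \<inter> U = {}}"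
  have "prob_rand_subset V p (\<lambda>W. transversal_within G W U) =
      prob_rand_subset V p (\<lambda>W. U \<subseteq> W \<and> (\<forall>B\<in>G. B \<subseteq> W \<longrightarrow> B \<inter> U \<noteq> {}))"
    unfolding transversal_within_def induced_def by (intro prob_rand_subset_cong) auto
  also have "\<dots> =
      p ^ card U * prob_rand_subset (V - U) p (\<lambda>W. \<forall>B\<in>G. B \<subseteq> U \<union> W \<longrightarrow> B \<inter> U \<noteq> {})"
    by (rule prob_rand_subset_contains[OF V U])
  also have "prob_rand_subset (V - U) p (\<lambda>W. \<forall>B\<in>G. B \<subseteq> U \<union> W \<longrightarrow> B \<inter> U \<noteq> {}) =
      prob_rand_subset (V - U) p (\<lambda>W. \<forall>B\<in>?GU. \<not> B \<subseteq> W)"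
  proof (intro prob_rand_subset_cong)
    have "B \<subseteq> U \<union> W \<longleftrightarrow> B \<subseteq> W" if "B \<inter> U = {}" for B W using that by blast
    then show "(\<forall>B\<in>G. B \<subseteq> U \<union> W \<longrightarrow> B \<inter> U \<noteq> {}) = (\<forall>B\<in>?GU. \<not> B \<subseteq> W)" for W
      by auto
  qed
  also have "\<dots> \<le> exp (- mu_p p ?GU + Delta_p p ?GU)"
    using V G p by (intro janson_inequality) auto
  finally show ?thesis using p by (simp add: mult_left_mono)
qed

section \<open>Counting matchings\<close>

lemma power_Suc_add_ge:
  fixes s w :: real
  assumes "0 \<le> s" "0 \<le> w"
  shows "s ^ Suc k + real (Suc k) * w * s ^ k \<le> (s + w) ^ Suc k"
proof (induction k)
  case 0
  then show ?case by simp
next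
  case (Suc k)
  have "s ^ Suc (Suc k) + real (Suc (Suc k)) * w * s ^ Suc k
      \<le> (s ^ Suc k + real (Suc k) * w * s ^ k) * (s + w)"
    using assms by (simp add: algebra_simps)
  also have "\<dots> \<le> (s + w) ^ Suc k * (s + w)"
    using Suc assms by (intro mult_right_mono) auto
  finally show ?case by (simp add: algebra_simps)
qed

lemma subsets_card_Suc_insert:
  assumes "finite H" "a \<notin> H"
  shows "{M. M \<subseteq> insert a H \<and> card M = Suc k} =
    {M. M \<subseteq> H \<and> card M = Suc k} \<union> insert a ` {M. M \<subseteq> H \<and> card M = k}"
proof (intro equalityI subsetI)
  fix M assume M: "M \<in> {M. M \<subseteq> insert a H \<and> card M = Suc k}"
  show "M \<in> {M. M \<subseteq> H \<and> card M = Suc k} \<union> insert a ` {M. M \<subseteq> H \<and> card M = k}"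
  proof (cases "a \<in> M")
    case True
    have "finite M" using M assms(1) by (auto intro: finite_subset[of M "insert a H"])
    then have "M = insert a (M - {a})" "M - {a} \<subseteq> H" "card (M - {a}) = k" using True M by auto
    then show ?thesis by blast
  qed (use M in auto)
next
  fix M assume "M \<in> {M. M \<subseteq> H \<and> card M = Suc k} \<union> insert a ` {M. M \<subseteq> H \<and> card M = k}"
  then show "M \<in> {M. M \<subseteq> insert a H \<and> card M = Suc k}"
  proof
    assume "M \<in> insert a ` {M. M \<subseteq> H \<and> card M = k}"
    then obtain M' where "M = insert a M'" "M' \<subseteq> H" "card M' = k" by auto
    moreover have "finite M'" "a \<notin> M'" using finite_subset[OF \<open>M' \<subseteq> H\<close> assms(1)] assms(2) \<open>M' \<subseteq> H\<close> by auto
    ultimately show ?thesis by auto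
  qed auto
qed

lemma sum_prod_subsets_card_eq_le:
  fixes f :: "'b \<Rightarrow> real"
  assumes "finite H" "\<And>A. 0 \<le> f A"
  shows "(\<Sum>M\<in>{M. M \<subseteq> H \<and> card M = j}. \<Prod>A\<in>M. f A) \<le> (\<Sum>A\<in>H. f A) ^ j / fact j"
  using assms(1)
proof (induction H arbitrary: j rule: finite_induct)
  case empty
  have empty_subsets: "{M. M \<subseteq> {} \<and> card M = j} = (if j = 0 then {{}} else {})" by auto
  show ?case unfolding empty_subsets by (cases "j = 0") simp_all
next
  case (insert a H)
  let ?S = "\<lambda>j. \<Sum>M\<in>{M. M \<subseteq> H \<and> card M = j}. \<Prod>A\<in>M. f A"
  define s where "s = (\<Sum>A\<in>H. f A)"
  have "0 \<le> s" unfolding s_def by (simp add: sum_nonneg assms)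
  show ?case
  proof (cases j)
    case 0
    have "card M = 0 \<longleftrightarrow> M = {}" if "M \<subseteq> insert a H" for M
      using finite_subset[OF that] insert(1) by auto
    then have "{M. M \<subseteq> insert a H \<and> card M = j} = {{}}" using 0 by auto
    then show ?thesis using 0 by simp
  next
    case (Suc k)
    have inj: "inj_on (insert a) {M. M \<subseteq> H \<and> card M = k}"
      using insert(2) by (intro inj_onI) (metis Diff_insert_absorb mem_Collect_eq subset_iff)
    have "(\<Sum>M\<in>{M. M \<subseteq> insert a H \<and> card M = j}. \<Prod>A\<in>M. f A) =
        ?S j + (\<Sum>M\<in>{M. M \<subseteq> H \<and> card M = k}. \<Prod>A\<in>insert a M. f A)"
      unfolding Suc subsets_card_Suc_insert[OF insert(1,2)] using insert
      by (subst sum.union_disjoint) (auto simp: sum.reindex[OF inj])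
    also have "(\<Sum>M\<in>{M. M \<subseteq> H \<and> card M = k}. \<Prod>A\<in>insert a M. f A) = f a * ?S k"
      unfolding sum_distrib_left
    proof (intro sum.cong refl)
      fix M assume "M \<in> {M. M \<subseteq> H \<and> card M = k}"
      then have "finite M" "a \<notin> M" using finite_subset[of M H] insert(1,2) by auto
      then show "(\<Prod>A\<in>insert a M. f A) = f a * (\<Prod>A\<in>M. f A)" by simp
    qed
    also have "?S j + f a * ?S k \<le> s ^ j / fact j + f a * (s ^ k / fact k)"
      using insert.IH[of j] insert.IH[of k] assms(2)[of a] unfolding s_def
      by (intro add_mono mult_left_mono) auto
    also have "\<dots> = (s ^ Suc k + real (Suc k) * f a * s ^ k) / fact (Suc k)"
      unfolding Suc by (simp add: field_simps del: of_nat_Suc)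
    also have "\<dots> \<le> (s + f a) ^ Suc k / fact (Suc k)"
      by (intro divide_right_mono power_Suc_add_ge \<open>0 \<le> s\<close> assms(2)) simp
    finally show ?thesis using insert Suc unfolding s_def by (simp add: add.commute)
  qed
qed

lemma sum_prod_subsets_card_atMost_le:
  fixes f :: "'b \<Rightarrow> real"
  assumes "finite H" "\<And>A. 0 \<le> f A"
  shows "(\<Sum>M\<in>{M. M \<subseteq> H \<and> card M \<le> n}. \<Prod>A\<in>M. f A) \<le> (\<Sum>j\<le>n. (\<Sum>A\<in>H. f A) ^ j / fact j)"
proof -
  have "{M. M \<subseteq> H \<and> card M \<le> n} = (\<Union>j\<le>n. {M. M \<subseteq> H \<and> card M = j})" by auto
  then have "(\<Sum>M\<in>{M. M \<subseteq> H \<and> card M \<le> n}. \<Prod>A\<in>M. f A) =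
      (\<Sum>M\<in>(\<Union>j\<le>n. {M. M \<subseteq> H \<and> card M = j}). \<Prod>A\<in>M. f A)" by simp
  also have "\<dots> = (\<Sum>j\<le>n. \<Sum>M\<in>{M. M \<subseteq> H \<and> card M = j}. \<Prod>A\<in>M. f A)"
    by (rule sum.UNION_disjoint) (use assms(1) in auto)
  also have "\<dots> \<le> (\<Sum>j\<le>n. (\<Sum>A\<in>H. f A) ^ j / fact j)"
    by (intro sum_mono sum_prod_subsets_card_eq_le assms)
  finally show ?thesis .
qed

section \<open>The lower tail of the matching number\<close>

lemma prob_transversal_light_matching_le:
  fixes p t :: real
  assumes V: "finite V" and H: "H \<subseteq> Pow V" and ne: "{} \<notin> H" and p: "0 \<le> p" "p \<le> 1"
    and M: "M \<subseteq> light_edges H p t" "pairwise disjnt M"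
  shows "prob_rand_subset V p (\<lambda>W. transversal_within (light_edges H p t) W (\<Union>M)) \<le>
    (\<Prod>A\<in>M. p ^ card A) * exp (- mu_p p (light_edges H p t) + Delta_p p H + (p + t) * card M)"
proof -
  define L where "L = light_edges H p t"
  define U where "U = \<Union>M"
  have "finite H" using H V by (meson finite_Pow_iff finite_subset)
  have "L \<subseteq> H" unfolding L_def light_edges_def by auto
  then have "finite L" "L \<subseteq> Pow V" using \<open>finite H\<close> H by (auto intro: finite_subset[of L H])
  have "U \<subseteq> V" unfolding U_def using M \<open>L \<subseteq> Pow V\<close> L_def by blast
  have "L = {B\<in>L. B \<inter> U = {}} \<union> {B\<in>L. B \<inter> U \<noteq> {}}" by blast
  then have "mu_p p L = mu_p p {B\<in>L. B \<inter> U = {}} + mu_p p {B\<in>L. B \<inter> U \<noteq> {}}"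
    unfolding mu_p_def using \<open>finite L\<close> by (metis (no_types, lifting) sum.union_disjoint finite_Un disjoint_iff mem_Collect_eq)
  moreover have "mu_p p {B\<in>L. B \<inter> U \<noteq> {}} \<le> card M * (p + t)"
    unfolding L_def U_def by (rule mu_p_meeting_light_edges_le[OF V H ne p M(1)])
  moreover have "Delta_p p {B\<in>L. B \<inter> U = {}} \<le> Delta_p p H"
    using \<open>finite H\<close> \<open>L \<subseteq> H\<close> p by (intro Delta_p_mono) auto
  ultimately have exponent_le: "- mu_p p {B\<in>L. B \<inter> U = {}} + Delta_p p {B\<in>L. B \<inter> U = {}} \<le>
      - mu_p p L + Delta_p p H + (p + t) * card M"
    by (simp add: algebra_simps)
  have "prob_rand_subset V p (\<lambda>W. transversal_within L W U) \<le>
      p ^ card U * exp (- mu_p p {B\<in>L. B \<inter> U = {}} + Delta_p p {B\<in>L. B \<inter> U = {}})"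
    by (rule prob_transversal_le[OF V \<open>L \<subseteq> Pow V\<close> \<open>U \<subseteq> V\<close> p])
  also have "\<dots> \<le> p ^ card U * exp (- mu_p p L + Delta_p p H + (p + t) * card M)"
    using exponent_le p by (intro mult_left_mono) auto
  also have "card U = (\<Sum>A\<in>M. card A)"
    unfolding U_def using M \<open>L \<subseteq> Pow V\<close> V
    by (intro card_Union_disjoint) (auto simp: L_def intro: finite_subset[of _ V])
  finally show ?thesis unfolding L_def U_def by (simp add: power_sum)
qed

lemma prob_matching_number_le_light:
  fixes p t :: real
  assumes V: "finite V" and H: "H \<subseteq> Pow V" and ne: "{} \<notin> H" and p: "0 \<le> p" "p \<le> 1"
    and t: "0 \<le> t"
  shows "prob_rand_subset V p (\<lambda>W. matching_number (induced H W) \<le> n) \<le>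
    exp (- mu_p p (light_edges H p t) + Delta_p p H + (p + t) * n) *
    (\<Sum>j\<le>n. mu_p p (light_edges H p t) ^ j / fact j)"
proof -
  define L where "L = light_edges H p t"
  define K where "K = exp (- mu_p p L + Delta_p p H + (p + t) * n)"
  define Ms where "Ms = {M. M \<subseteq> L \<and> pairwise disjnt M \<and> card M \<le> n}"
  have "finite H" using H V by (meson finite_Pow_iff finite_subset)
  have "L \<subseteq> H" unfolding L_def light_edges_def by auto
  then have "finite L" using \<open>finite H\<close> finite_subset by blast
  then have "finite Ms" unfolding Ms_def by (auto intro: finite_subset[of _ "Pow L"])
  have "prob_rand_subset V p (\<lambda>W. matching_number (induced H W) \<le> n) \<le>
      prob_rand_subset V p (\<lambda>W. \<exists>M\<in>Ms. transversal_within L W (\<Union>M))"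
  proof (rule prob_rand_subset_mono[OF V p])
    fix W assume "matching_number (induced H W) \<le> n"
    then obtain M where "M \<subseteq> L" "pairwise disjnt M" "card M \<le> n" "transversal_within L W (\<Union>M)"
      by (rule obtain_transversal_matching[OF \<open>finite H\<close> ne \<open>L \<subseteq> H\<close>])
    then show "\<exists>M\<in>Ms. transversal_within L W (\<Union>M)" unfolding Ms_def by blast
  qed
  also have "\<dots> \<le> (\<Sum>M\<in>Ms. prob_rand_subset V p (\<lambda>W. transversal_within L W (\<Union>M)))"
    by (rule prob_rand_subset_union_bound[OF V \<open>finite Ms\<close> p])
  also have "\<dots> \<le> (\<Sum>M\<in>Ms. (\<Prod>A\<in>M. p ^ card A) * K)"
  proof (rule sum_mono)
    fix M assume M: "M \<in> Ms"
    then have "prob_rand_subset V p (\<lambda>W. transversal_within L W (\<Union>M)) \<le>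
        (\<Prod>A\<in>M. p ^ card A) * exp (- mu_p p L + Delta_p p H + (p + t) * card M)"
      unfolding L_def Ms_def by (intro prob_transversal_light_matching_le[OF V H ne p]) (auto simp: L_def)
    also have "\<dots> \<le> (\<Prod>A\<in>M. p ^ card A) * K"
      using M p t unfolding K_def Ms_def by (intro mult_left_mono prod_nonneg) (auto intro: mult_left_mono)
    finally show "prob_rand_subset V p (\<lambda>W. transversal_within L W (\<Union>M)) \<le> (\<Prod>A\<in>M. p ^ card A) * K" .
  qed
  also have "\<dots> = K * (\<Sum>M\<in>Ms. \<Prod>A\<in>M. p ^ card A)" by (simp add: sum_distrib_left mult.commute)
  also have "\<dots> \<le> K * (\<Sum>M\<in>{M. M \<subseteq> L \<and> card M \<le> n}. \<Prod>A\<in>M. p ^ card A)"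
    unfolding K_def Ms_def
    by (intro mult_left_mono sum_mono2) (use \<open>finite L\<close> p in \<open>auto simp: prod_nonneg\<close>)
  also have "\<dots> \<le> K * (\<Sum>j\<le>n. mu_p p L ^ j / fact j)"
    unfolding K_def mu_p_def by (intro mult_left_mono sum_prod_subsets_card_atMost_le \<open>finite L\<close>) (use p in auto)
  finally show ?thesis unfolding K_def L_def .
qed

lemma prob_matching_number_le:
  fixes p t :: real
  assumes V: "finite V" and H: "H \<subseteq> Pow V" and ne: "{} \<notin> H" and p: "0 \<le> p" "p \<le> 1"
    and t: "0 < t"
  shows "prob_rand_subset V p (\<lambda>W. matching_number (induced H W) \<le> n) \<le>
    exp (- mu_p p H + (1 + 2 * p / t) * Delta_p p H + (p + t) * n) * (\<Sum>j\<le>n. mu_p p H ^ j / fact j)"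
proof -
  let ?\<mu>L = "mu_p p (light_edges H p t)"
  have "finite H" using H V by (meson finite_Pow_iff finite_subset)
  have "0 \<le> ?\<mu>L" using p by (simp add: mu_p_nonneg)
  moreover have "?\<mu>L \<le> mu_p p H"
    using \<open>finite H\<close> p by (intro mu_p_mono) (auto simp: light_edges_def)
  moreover have "mu_p p H - ?\<mu>L \<le> 2 * p * Delta_p p H / t"
    by (rule mu_p_heavy_edges_le[OF V H p t])
  ultimately have "- ?\<mu>L + Delta_p p H \<le> - mu_p p H + (1 + 2 * p / t) * Delta_p p H"
    by (simp add: distrib_right)
  then have "exp (- ?\<mu>L + Delta_p p H + (p + t) * n) * (\<Sum>j\<le>n. ?\<mu>L ^ j / fact j) \<le>
      exp (- mu_p p H + (1 + 2 * p / t) * Delta_p p H + (p + t) * n) * (\<Sum>j\<le>n. mu_p p H ^ j / fact j)"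
    using \<open>0 \<le> ?\<mu>L\<close> \<open>?\<mu>L \<le> mu_p p H\<close>
    by (intro mult_mono sum_mono divide_right_mono power_mono sum_nonneg) auto
  with prob_matching_number_le_light[OF V H ne p, of t n] t show ?thesis by simp
qed

section \<open>Truncated exponential series\<close>

lemma truncated_exp_le_exp:
  fixes x :: real
  assumes "0 \<le> x"
  shows "(\<Sum>j\<le>n. x ^ j / fact j) \<le> exp x"
proof -
  have series: "(\<lambda>j. x ^ j / fact j) sums exp x"
    using exp_converges[of x] by (simp add: divide_inverse mult.commute)
  have "(\<Sum>j\<le>n. x ^ j / fact j) = (\<Sum>j<Suc n. x ^ j / fact j)" by (simp add: lessThan_Suc_atMost)
  also have "\<dots> \<le> (\<Sum>j. x ^ j / fact j)"
    by (rule sum_le_suminf[OF sums_summable[OF series]]) (use assms in auto)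
  also have "\<dots> = exp x" using series sums_unique by metis
  finally show ?thesis .
qed

lemma truncated_exp_le_entropy:
  fixes a y :: real
  assumes "0 < a" "a \<le> y" "real n \<le> a"
  shows "(\<Sum>j\<le>n. y ^ j / fact j) \<le> exp (a * ln (exp 1 * y / a))"
proof -
  have "1 \<le> y / a" using assms by simp
  have "(\<Sum>j\<le>n. y ^ j / fact j) \<le> (\<Sum>j\<le>n. (y / a) powr a * (a ^ j / fact j))"
  proof (rule sum_mono)
    fix j assume "j \<in> {..n}"
    then have "real j \<le> a" using assms by simp
    have "y ^ j = (y / a) ^ j * a ^ j" using assms by (simp add: power_divide)
    also have "(y / a) ^ j = (y / a) powr real j" using \<open>1 \<le> y / a\<close> by (simp add: powr_realpow)
    also have "\<dots> \<le> (y / a) powr a" using \<open>1 \<le> y / a\<close> \<open>real j \<le> a\<close> by (intro powr_mono) auto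
    finally have "y ^ j \<le> (y / a) powr a * a ^ j" using assms by (simp add: mult_right_mono)
    then show "y ^ j / fact j \<le> (y / a) powr a * (a ^ j / fact j)"
      by (simp add: divide_right_mono)
  qed
  also have "\<dots> \<le> (y / a) powr a * exp a"
    unfolding sum_distrib_left[symmetric]
    using assms by (intro mult_left_mono truncated_exp_le_exp) auto
  also have "\<dots> = exp (a * ln (exp 1 * y / a))"
    using assms by (simp add: powr_def ln_mult ln_div mult_exp_exp algebra_simps)
  finally show ?thesis .
qed

lemma mult_ln_ratio_le_Suc:
  fixes a m :: real
  assumes "0 < a" "a \<le> m"
  shows "a * ln (m / a) \<le> (a + 1) * ln ((m + 1) / (a + 1))"
proof -
  define r where "r = m / a"
  define l where "l = a / (a + 1)"
  define q where "q = l * r + 1 - l"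
  have "1 \<le> r" "0 < l" "l < 1" unfolding r_def l_def using assms by auto
  then have "0 < q" unfolding q_def by (smt (verit) mult_pos_pos)
  have "l * (a + 1) = a" "a * r = m" unfolding l_def r_def using assms by auto
  have "q * (a + 1) = l * (a + 1) * r + (a + 1) - l * (a + 1)" unfolding q_def by (simp add: algebra_simps)
  also have "\<dots> = m + 1" using \<open>l * (a + 1) = a\<close> \<open>a * r = m\<close> by simp
  finally have "q * (a + 1) = m + 1" .
  then have q_eq: "q = (m + 1) / (a + 1)" using assms by (simp add: field_simps)
  text \<open>Concavity of \<open>ln\<close>, in the form of \<open>ln x \<le> x - 1\<close> at \<open>r / q\<close> and \<open>1 / q\<close>, weighted by \<open>l\<close> and \<open>1 - l\<close>.\<close>
  have "l * ln (r / q) + (1 - l) * ln (1 / q) \<le> l * (r / q - 1) + (1 - l) * (1 / q - 1)"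
    using \<open>0 < q\<close> \<open>1 \<le> r\<close> \<open>0 < l\<close> \<open>l < 1\<close>
    by (intro add_mono mult_left_mono ln_le_minus_one) auto
  also have "\<dots> = 0" using \<open>0 < q\<close> unfolding q_def by (simp add: field_simps)
  finally have "l * ln r \<le> ln q" using \<open>0 < q\<close> \<open>1 \<le> r\<close> \<open>0 < l\<close> by (simp add: ln_div algebra_simps)
  then have "(a + 1) * (l * ln r) \<le> (a + 1) * ln q" using assms by (intro mult_left_mono) auto
  moreover have "(a + 1) * (l * ln r) = a * ln (m / a)" unfolding l_def r_def using assms by simp
  ultimately show ?thesis using q_eq by simp
qed

text \<open>For \<open>c = 1\<close> this absorbs a removed empty edge: the extra factor \<open>exp (-1)\<close> pays for
  shifting \<open>a\<close> to \<open>a + 1\<close> via \<open>mult_ln_ratio_le_Suc\<close>.\<close>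

lemma truncated_exp_le_alpha:
  fixes c m \<alpha> :: real
  assumes c: "c = 0 \<or> c = 1" and m: "0 \<le> m" and \<alpha>: "0 < \<alpha>" "\<alpha> \<le> 1"
    and a: "0 \<le> \<alpha> * (m + c) - c" "real n \<le> \<alpha> * (m + c) - c"
  shows "(\<Sum>j\<le>n. m ^ j / fact j) \<le> exp (- c + \<alpha> * (m + c) * ln (exp 1 / \<alpha>))"
proof -
  define a where "a = \<alpha> * (m + c) - c"
  have ln_ge_1: "1 \<le> ln (exp 1 / \<alpha>)" using \<alpha> by (simp add: ln_div)
  show ?thesis
  proof (cases "a = 0")
    case True
    then have "n = 0" "\<alpha> * (m + c) = c" using a unfolding a_def by auto
    moreover have "c \<le> c * ln (exp 1 / \<alpha>)" using c ln_ge_1 by auto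
    ultimately show ?thesis by simp
  next
    case False
    then have "0 < a" using a unfolding a_def by simp
    have "\<alpha> * (m + c) \<le> m + c" using m c \<alpha> by (intro mult_left_le_one_le) auto
    then have "a \<le> m" unfolding a_def by linarith
    have "a * ln (exp 1 * m / a) = a + a * ln (m / a)"
      using \<open>0 < a\<close> \<open>a \<le> m\<close> by (simp add: ln_mult ln_div algebra_simps)
    also have "a + a * ln (m / a) \<le> - c + \<alpha> * (m + c) * ln (exp 1 / \<alpha>)"
      using c
    proof
      assume "c = 0"
      then have "m / a = 1 / \<alpha>" "a = \<alpha> * m" using \<alpha> \<open>0 < a\<close> unfolding a_def by auto
      then show ?thesis using \<open>c = 0\<close> \<alpha> by (simp add: ln_div algebra_simps)
    next
      assume "c = 1"
      then have "\<alpha> * (m + c) = a + 1" "exp 1 / \<alpha> = exp 1 * ((m + 1) / (a + 1))"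
        using \<alpha> \<open>0 < a\<close> unfolding a_def by (auto simp: field_simps)
      moreover have "ln (exp 1 * ((m + 1) / (a + 1))) = ln (exp 1) + ln ((m + 1) / (a + 1))"
        using \<open>0 < a\<close> \<open>a \<le> m\<close> by (intro ln_mult_pos) auto
      ultimately show ?thesis
        using mult_ln_ratio_le_Suc[OF \<open>0 < a\<close> \<open>a \<le> m\<close>] \<open>c = 1\<close> by (simp add: algebra_simps)
    qed
    finally have "a * ln (exp 1 * m / a) \<le> - c + \<alpha> * (m + c) * ln (exp 1 / \<alpha>)" .
    moreover have "(\<Sum>j\<le>n. m ^ j / fact j) \<le> exp (a * ln (exp 1 * m / a))"
      using \<open>0 < a\<close> \<open>a \<le> m\<close> a unfolding a_def by (intro truncated_exp_le_entropy) auto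
    ultimately show ?thesis by (meson exp_le_cancel_iff order.trans)
  qed
qed

lemma prob_matching_number_le_shifted:
  fixes p \<alpha> \<eta> c :: real
  assumes V: "finite V" and H: "H \<subseteq> Pow V" and ne: "{} \<notin> H" and p: "0 \<le> p" "p \<le> 1"
    and \<alpha>: "0 < \<alpha>" "\<alpha> \<le> 1" and \<eta>: "0 < \<eta>" and c: "c = 0 \<or> c = 1"
  shows "prob_rand_subset V p (\<lambda>W. real (matching_number (induced H W)) + c \<le> \<alpha> * (mu_p p H + c))
    \<le> exp (- (1 - \<alpha> * ln (exp 1 / \<alpha>) - \<alpha> * p - \<eta>) * (mu_p p H + c)
           + (1 + 2 * \<alpha> * p / \<eta>) * Delta_p p H)"
    (is "prob_rand_subset V p ?event \<le> exp ?bound")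
proof (cases "\<alpha> * (mu_p p H + c) - c < 0")
  case True
  then have "prob_rand_subset V p ?event = prob_rand_subset V p (\<lambda>W. False)"
    by (intro prob_rand_subset_cong) auto
  then show ?thesis by simp
next
  case False
  define \<mu> where "\<mu> = mu_p p H"
  define a where "a = \<alpha> * (\<mu> + c) - c"
  define n where "n = nat \<lfloor>a\<rfloor>"
  define t where "t = \<eta> / \<alpha>"
  have "0 \<le> a" "real n \<le> a" using False unfolding a_def n_def \<mu>_def by linarith+
  have "0 < t" unfolding t_def using \<alpha> \<eta> by simp
  have "prob_rand_subset V p ?event \<le> prob_rand_subset V p (\<lambda>W. matching_number (induced H W) \<le> n)"
    by (rule prob_rand_subset_mono[OF V p]) (simp add: n_def a_def \<mu>_def le_nat_floor)
  also have "\<dots> \<le> exp (- \<mu> + (1 + 2 * p / t) * Delta_p p H + (p + t) * n) * (\<Sum>j\<le>n. \<mu> ^ j / fact j)"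
    unfolding \<mu>_def by (rule prob_matching_number_le[OF V H ne p \<open>0 < t\<close>])
  also have "\<dots> \<le> exp (- \<mu> + (1 + 2 * p / t) * Delta_p p H + (p + t) * n)
      * exp (- c + \<alpha> * (\<mu> + c) * ln (exp 1 / \<alpha>))"
    using \<open>0 \<le> a\<close> \<open>real n \<le> a\<close> unfolding a_def \<mu>_def
    by (intro mult_left_mono truncated_exp_le_alpha[OF c mu_p_nonneg[OF p(1)] \<alpha>]) auto
  also have "\<dots> \<le> exp ?bound"
  proof -
    have "(p + t) * n \<le> (p + t) * (\<alpha> * (\<mu> + c))"
      using \<open>real n \<le> a\<close> \<open>0 < t\<close> p c \<alpha> unfolding a_def by (intro mult_left_mono) auto
    also have "\<dots> = (\<alpha> * p + \<eta>) * (\<mu> + c)" unfolding t_def using \<alpha> by (simp add: field_simps)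
    finally have "(p + t) * n \<le> (\<alpha> * p + \<eta>) * (\<mu> + c)" .
    moreover have "2 * p / t = 2 * \<alpha> * p / \<eta>" unfolding t_def using \<alpha> \<eta> by simp
    ultimately show ?thesis unfolding mult_exp_exp \<mu>_def by (simp add: algebra_simps)
  qed
  finally show ?thesis .
qed

theorem mainTheorem2:
  fixes V :: "'a set" and H :: "'a set set" and p \<alpha> \<eta> :: real
  assumes "finite V" and "H \<subseteq> Pow V"
    and "0 \<le> p" and "p \<le> 1"
    and "0 < \<alpha>" and "\<alpha> \<le> 1"
    and "0 < \<eta>" and "\<eta> \<le> 1"
  shows "prob_rand_subset V p (\<lambda>W. real (matching_number (induced H W)) \<le> \<alpha> * mu_p p H)
     \<le> exp (- (1 - \<alpha> * ln (exp 1 / \<alpha>) - \<alpha> * p - \<eta>) * mu_p p H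
             + (1 + 2 * \<alpha> * p / \<eta>) * Delta_p p H)"
proof -
  define H0 where "H0 = H - {{}}"
  define c :: real where "c = (if {} \<in> H then 1 else 0)"
  have "finite H" using assms(1,2) by (meson finite_Pow_iff finite_subset)
  have "H0 \<subseteq> Pow V" "{} \<notin> H0" unfolding H0_def using assms(2) by auto
  have mu_p_eq: "mu_p p H = mu_p p H0 + c"
    unfolding H0_def c_def by (rule mu_p_remove_empty[OF \<open>finite H\<close>])
  have "real (matching_number (induced H W)) = real (matching_number (induced H0 W)) + c" for W
    using matching_number_remove_empty[OF \<open>finite H\<close>, of W] unfolding H0_def c_def by auto
  then have "prob_rand_subset V p (\<lambda>W. real (matching_number (induced H W)) \<le> \<alpha> * mu_p p H) =
      prob_rand_subset V p (\<lambda>W. real (matching_number (induced H0 W)) + c \<le> \<alpha> * (mu_p p H0 + c))"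
    unfolding mu_p_eq by simp
  also have "\<dots> \<le> exp (- (1 - \<alpha> * ln (exp 1 / \<alpha>) - \<alpha> * p - \<eta>) * (mu_p p H0 + c)
      + (1 + 2 * \<alpha> * p / \<eta>) * Delta_p p H0)"
    using assms \<open>H0 \<subseteq> Pow V\<close> \<open>{} \<notin> H0\<close>
    by (intro prob_matching_number_le_shifted) (auto simp: c_def)
  finally show ?thesis unfolding mu_p_eq H0_def Delta_p_remove_empty[of p H, symmetric] .
qed

end
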